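(* For a coloured integer $k_x$, let $G_{k_x}(a,b,q)=\sum a^{u}b^{v}q^{n}$, the sum running over all admissible coloured partitions (including the empty one) whose largest part $\lambda_1$ satisfies $\lambda_1\le k_x$ in the total order of coloured integers, where $n,u,v$ are the size and the two weights of the partition. Writing $G_{k_x}$ for $G_{k_x}(a,b,q)$, for all integers $k\ge 1$ the following identities of formal power series hold: \begin{align*} G_{(2k+1)_{ab}}&=G_{(2k)_{b}}+abq^{2k+1} G_{(2k-1)_{a}},\\ G_{(2k+1)_a}&=G_{(2k+1)_{ab}}+aq^{2k+1} G_{(2k)_{ab}},\\ G_{(2k+1)_{b^2}}&=G_{(2k+1)_{a}}+b^2q^{2k+1}G_{(2k-1)_{a}},\\ G_{(2k+1)_{b}}&=G_{(2k+1)_{b^2}}+bq^{2k+1}G_{(2k)_{a}},\\ G_{(2k+2)_{ab}}&= G_{(2k+1)_{b}}+abq^{2k+2}G_{(2k)_{a}}+ab^2q^{4k+2}G_{(2k-1)_{a}},\\ G_{(2k+2)_{a}}&= G_{(2k+2)_{ab}}+ aq^{2k+2} G_{(2k)_{a}}+ abq^{4k+2}G_{(2k-1)_{a}},\\ G_{(2k+3)_{a^2}}&=G_{(2k+2)_{a}}+a^2q^{2k+3}G_{(2k)_{a}}+a^2bq^{4k+3}G_{(2k-1)_{a}},\\ G_{(2k+2)_{b}}&=G_{(2k+3)_{a^2}}+bq^{2k+2}G_{(2k+1)_{a}}. \end{align*}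
   Context: Coloured integers: every positive integer $k$ occurs in the three colours $a$, $b$, $ab$ (written $k_a$, $k_b$, $k_{ab}$). In addition, odd positive integers occur in the colours $a^2$ and $b^2$: $k_{b^2}$ for every odd $k\ge 1$ and $k_{a^2}$ for every odd $k \geq 3$. The integer value of $k_x$ is $k$ and its colour is $x$. These coloured integers are totally ordered by $$1_{ab} < 1_a < 1_{b^2} <1_{b} <2_{ab} < 2_a <3_{a^2} < 2_{b} <3_{ab} < 3_a < 3_{b^2} <3_b <4_{ab}<4_a<5_{a^2}<4_b<5_{ab}<\cdots,$$ that is, for every odd $m\ge1$: $m_{ab}<m_a<m_{b^2}<m_b<(m+1)_{ab}<(m+1)_a<(m+2)_{a^2}<(m+1)_b<(m+2)_{ab}$. Difference conditions: for a coloured integer $\lambda$ (the "upper" part) of colour $x$ and a coloured integer $\mu$ (the "lower" part) of colour $y$, a minimal difference $A(\lambda,\mu)$ is defined as follows, where the row is determined by the colour and the parity of the integer value of $\lambda$, and the entries are listed for $y = a, b, ab, a^2, b^2$ in this order: - $\lambda$ of colour $a$, odd: $2,2,1,2,2$; - $\lambda$ of colour $b^2$: $2,3,2,2,4$; - $\lambda$ of colour $b$, odd: $1,2,1,2,2$; - $\lambda$ of colour $ab$, even: $2,2,2,3,3$; - $\lambda$ of colour $a$, even: $2,2,2,3,3$; - $\lambda$ of colour $a^2$: $3,3,3,4,4$; - $\lambda$ of colour $b$, even: $1,2,1,1,3$; - $\lambda$ of colour $ab$, odd: $2,3,2,2,3$. An admissible coloured partition is a finite (possibly empty) sequence $\lambda_1,\dots,\lambda_s$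 of coloured integers, none of which equals $1_{ab}$ or $1_{b^2}$, such that for every $1\le i<s$ the integer values satisfy $\lambda_i-\lambda_{i+1}\ge A(\lambda_i,\lambda_{i+1})$. Its size $n$ is the sum of the integer values of its parts. Its weight $u$ is the number of parts of colour $a$ or $ab$ plus twice the number of parts of colour $a^2$; its weight $v$ is the number of parts of colour $b$ or $ab$ plus twice the number of parts of colour $b^2$. *)

theory Defs
  imports "HOL-Computational_Algebra.Formal_Power_Series"
begin

datatype colour = Ca | Cb | Cab | Ca2 | Cb2

type_synonym cint = "nat \<times> colour"

definition valid_cint :: "cint \<Rightarrow> bool" where
  "valid_cint c = (case c of (k, x) \<Rightarrow> k \<ge> 1 \<and>
     (case x of Ca \<Rightarrow> True | Cb \<Rightarrow> True | Cab \<Rightarrow> True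
              | Ca2 \<Rightarrow> odd k \<and> k \<ge> 3 | Cb2 \<Rightarrow> odd k))"

text \<open>Position in the total order
  1_ab < 1_a < 1_b2 < 1_b < 2_ab < 2_a < 3_a2 < 2_b < 3_ab < ... (meaningful on valid ones).\<close>
fun rank :: "cint \<Rightarrow> nat" where
  "rank (k, Cab) = (if odd k then 8 * ((k - 1) div 2) else 8 * ((k - 2) div 2) + 4)"
| "rank (k, Ca) = (if odd k then 8 * ((k - 1) div 2) + 1 else 8 * ((k - 2) div 2) + 5)"
| "rank (k, Cb2) = 8 * ((k - 1) div 2) + 2"
| "rank (k, Cb) = (if odd k then 8 * ((k - 1) div 2) + 3 else 8 * ((k - 2) div 2) + 7)"
| "rank (k, Ca2) = 8 * ((k - 3) div 2) + 6"

definition cle :: "cint \<Rightarrow> cint \<Rightarrow> bool" where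
  "cle c d = (rank c \<le> rank d)"

fun row :: "colour \<Rightarrow> nat \<Rightarrow> nat \<Rightarrow> nat \<Rightarrow> nat \<Rightarrow> nat \<Rightarrow> nat" where
  "row Ca  ea eb eab ea2 eb2 = ea"
| "row Cb  ea eb eab ea2 eb2 = eb"
| "row Cab ea eb eab ea2 eb2 = eab"
| "row Ca2 ea eb eab ea2 eb2 = ea2"
| "row Cb2 ea eb eab ea2 eb2 = eb2"

fun mindiff :: "cint \<Rightarrow> cint \<Rightarrow> nat" where
  "mindiff (k, Ca) (_, y) = (if odd k then row y 2 2 1 2 2 else row y 2 2 2 3 3)"
| "mindiff (k, Cb2) (_, y) = row y 2 3 2 2 4"
| "mindiff (k, Cb) (_, y) = (if odd k then row y 1 2 1 2 2 else row y 1 2 1 1 3)"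
| "mindiff (k, Cab) (_, y) = (if odd k then row y 2 3 2 2 3 else row y 2 2 2 3 3)"
| "mindiff (k, Ca2) (_, y) = row y 3 3 3 4 4"

definition admissible :: "cint list \<Rightarrow> bool" where
  "admissible p = ((\<forall>c \<in> set p. valid_cint c \<and> c \<noteq> (1, Cab) \<and> c \<noteq> (1, Cb2)) \<and>
     (\<forall>i. Suc i < length p \<longrightarrow>
        fst (p ! Suc i) + mindiff (p ! i) (p ! Suc i) \<le> fst (p ! i)))"

definition psize :: "cint list \<Rightarrow> nat" where
  "psize p = (\<Sum>c\<leftarrow>p. fst c)"

definition weight_u :: "cint list \<Rightarrow> nat" where
  "weight_u p = length (filter (\<lambda>c. snd c = Ca \<or> snd c = Cab) p)
               + 2 * length (filter (\<lambda>c. snd c = Ca2) p)"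

definition weight_v :: "cint list \<Rightarrow> nat" where
  "weight_v p = length (filter (\<lambda>c. snd c = Cb \<or> snd c = Cab) p)
               + 2 * length (filter (\<lambda>c. snd c = Cb2) p)"

definition parts_bounded :: "cint \<Rightarrow> nat \<Rightarrow> nat \<Rightarrow> nat \<Rightarrow> cint list set" where
  "parts_bounded kx n u v = {p. admissible p \<and> (p = [] \<or> cle (hd p) kx) \<and>
      psize p = n \<and> weight_u p = u \<and> weight_v p = v}"

text \<open>Formal power series in a, b, q as nested fps: outer variable q,
  middle variable b, inner variable a.\<close>
definition G :: "cint \<Rightarrow> int fps fps fps" where
  "G kx = Abs_fps (\<lambda>n. Abs_fps (\<lambda>v. Abs_fps (\<lambda>u. int (card (parts_bounded kx n u v)))))"

definition varq :: "int fps fps fps" where "varq = fps_X"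
definition varb :: "int fps fps fps" where "varb = fps_const fps_X"
definition vara :: "int fps fps fps" where "vara = fps_const (fps_const fps_X)"

end

theory Submission
  imports Defs
begin

text \<open>Every admissible partition with largest part at most $k_x$ either has largest part at most
  the predecessor of $k_x$ in the order of coloured integers, or begins with $k_x$ itself; in the
  second case the remaining parts form an admissible partition that may follow $k_x$. So each
  $G_{k_x}$ is $G$ of the predecessor plus the monomial of $k_x$ times the generating function of
  these continuations. The difference conditions make the continuations of $k_x$ exactly the
  partitions whose largest part is at most a fixed coloured integer, except after $(2k+2)_{ab}$,
  $(2k+2)_a$ and $(2k+3)_{a^2}$: there every part up to $(2k)_a$ may follow, and in addition the
  isolated part $(2k)_b$. Splitting off that part once more produces the terms with $q^{4k+2}$
  and $q^{4k+3}$.\<close>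

lemma pos_nat_parity_cases:
  fixes k :: nat
  assumes "k \<ge> 1"
  obtains m where "k = 2*m + 1" | m where "k = 2*m + 2"
proof (cases "odd k")
  case True then show ?thesis using that(1) by (auto elim: oddE)
next
  case False then obtain m where "k = 2*m" by (auto elim: evenE)
  with assms show ?thesis using that(2)[of "m - 1"] by simp
qed

lemma rank_Cab: "k \<ge> 1 \<Longrightarrow> rank (k, Cab) = 4*k - 4"
  by (erule pos_nat_parity_cases) simp_all

lemma rank_Ca: "k \<ge> 1 \<Longrightarrow> rank (k, Ca) = 4*k - 3"
  by (erule pos_nat_parity_cases) simp_all

lemma rank_Cb: "k \<ge> 1 \<Longrightarrow> rank (k, Cb) = 4*k - 1"
  by (erule pos_nat_parity_cases) simp_all

lemma rank_Cb2: "odd k \<Longrightarrow> rank (k, Cb2) = 4*k - 2"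
  by (auto elim: oddE)

lemma rank_Ca2:
  assumes "odd k" "k \<ge> 3" shows "rank (k, Ca2) = 4*k - 6"
proof -
  obtain m where "k = 2*m + 1" using assms(1) by (auto elim: oddE)
  with assms(2) have "k = 2*(m - 1) + 3" by simp
  then show ?thesis by simp
qed

lemmas rank_valid = rank_Cab rank_Ca rank_Cb rank_Cb2 rank_Ca2

lemma rank_inj_valid:
  assumes "valid_cint c" "valid_cint d" "rank c = rank d" shows "c = d"
  using assms
  by (cases c; cases d; rename_tac j x k y; case_tac x; case_tac y;
      simp add: valid_cint_def rank_valid del: rank.simps; presburger)

definition allowed_part :: "cint \<Rightarrow> bool" where
  "allowed_part c \<longleftrightarrow> valid_cint c \<and> c \<noteq> (1, Cab) \<and> c \<noteq> (1, Cb2)"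

definition may_follow :: "cint \<Rightarrow> cint \<Rightarrow> bool" where
  "may_follow c h \<longleftrightarrow> fst h + mindiff c h \<le> fst c"

lemma admissible_Nil [simp]: "admissible []"
  by (simp add: admissible_def)

lemma admissible_Cons:
  "admissible (c # p) \<longleftrightarrow> allowed_part c \<and> admissible p \<and> (p = [] \<or> may_follow c (hd p))"
proof -
  have "(\<forall>i. Suc i < length (c # p) \<longrightarrow> P i) \<longleftrightarrow> (p \<noteq> [] \<longrightarrow> P 0) \<and> (\<forall>i. Suc i < length p \<longrightarrow> P (Suc i))" for P
    by (cases p) (auto simp: less_Suc_eq_0_disj)
  then show ?thesis
    by (cases p) (auto simp: admissible_def allowed_part_def may_follow_def)
qed

lemma allowed_part_pos: "allowed_part c \<Longrightarrow> fst c \<ge> 1"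
  by (auto simp: allowed_part_def valid_cint_def)

definition parts_with :: "cint list set \<Rightarrow> nat \<Rightarrow> nat \<Rightarrow> nat \<Rightarrow> cint list set" where
  "parts_with S n u v = {p \<in> S. psize p = n \<and> weight_u p = u \<and> weight_v p = v}"

definition genfun :: "cint list set \<Rightarrow> int fps fps fps" where
  "genfun S = Abs_fps (\<lambda>n. Abs_fps (\<lambda>v. Abs_fps (\<lambda>u. int (card (parts_with S n u v)))))"

definition bounded_parts :: "cint \<Rightarrow> cint list set" where
  "bounded_parts kx = {p. admissible p \<and> (p = [] \<or> cle (hd p) kx)}"

definition tails :: "cint \<Rightarrow> cint list set" where
  "tails c = {p. admissible (c # p)}"

definition part_monomial :: "cint \<Rightarrow> int fps fps fps" where
  "part_monomial c = vara ^ weight_u [c] * varb ^ weight_v [c] * varq ^ fst c"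

lemma part_monomial_simps:
  "part_monomial (j, Ca) = vara * varq ^ j" "part_monomial (j, Cb) = varb * varq ^ j"
  "part_monomial (j, Cab) = vara * varb * varq ^ j"
  "part_monomial (j, Ca2) = vara ^ 2 * varq ^ j" "part_monomial (j, Cb2) = varb ^ 2 * varq ^ j"
  by (simp_all add: part_monomial_def weight_u_def weight_v_def power2_eq_square)

lemma G_eq_genfun: "G kx = genfun (bounded_parts kx)"
  by (simp add: G_def genfun_def parts_with_def bounded_parts_def parts_bounded_def)

lemma finite_parts_with:
  assumes "S \<subseteq> Collect admissible" shows "finite (parts_with S n u v)"
proof (rule finite_subset)
  have "length p \<le> psize p" "\<forall>c\<in>set p. fst c \<le> psize p" if "admissible p" for p
    using that by (induction p) (auto simp: admissible_Cons psize_def dest: allowed_part_pos)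
  then show "parts_with S n u v \<subseteq> {p. set p \<subseteq> {..n} \<times> UNIV \<and> length p \<le> n}"
    using assms by (force simp: parts_with_def)
  show "finite {p. set p \<subseteq> {..n} \<times> (UNIV :: colour set) \<and> length p \<le> n}"
  proof (intro finite_lists_length_le finite_cartesian_product)
    have "(UNIV :: colour set) = {Ca, Cb, Cab, Ca2, Cb2}"
      using colour.exhaust by blast
    then show "finite (UNIV :: colour set)" by (metis finite.emptyI finite_insert)
  qed simp
qed

lemma genfun_Un_disjoint:
  assumes "S \<subseteq> Collect admissible" "T \<subseteq> Collect admissible" "S \<inter> T = {}"
  shows "genfun (S \<union> T) = genfun S + genfun T"
proof -
  have "parts_with (S \<union> T) n u v = parts_with S n u v \<union> parts_with T n u v"
    "parts_with S n u v \<inter> parts_with T n u v = {}" for n u v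
    using assms(3) by (auto simp: parts_with_def)
  then show ?thesis
    by (simp add: genfun_def card_Un_disjoint finite_parts_with assms fps_eq_iff)
qed

lemma fps_nth_monomial_mult:
  fixes F :: "int fps fps fps"
  shows "fps_nth (fps_nth (fps_nth (vara ^ i * varb ^ j * varq ^ m * F) n) v) u =
    (if m \<le> n \<and> j \<le> v \<and> i \<le> u
     then fps_nth (fps_nth (fps_nth F (n - m)) (v - j)) (u - i) else 0)"
proof -
  have monomial: "vara ^ i * varb ^ j * varq ^ m * F =
      fps_const (fps_const (fps_X ^ i) * fps_X ^ j) * (fps_X ^ m * F)"
    by (simp add: vara_def varb_def varq_def mult.assoc fps_const_power)
  have "fps_nth (vara ^ i * varb ^ j * varq ^ m * F) n =
      (if n < m then 0 else fps_const (fps_X ^ i) * (fps_X ^ j * fps_nth F (n - m)))"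
    unfolding monomial by (simp add: fps_X_power_mult_nth mult.assoc)
  then show ?thesis
    by (auto simp: fps_X_power_mult_nth)
qed

lemma genfun_Cons_image: "genfun ((#) c ` S) = part_monomial c * genfun S"
proof -
  have "parts_with ((#) c ` S) n u v =
      (if fst c \<le> n \<and> weight_v [c] \<le> v \<and> weight_u [c] \<le> u
       then (#) c ` parts_with S (n - fst c) (u - weight_u [c]) (v - weight_v [c]) else {})" for n u v
    by (auto simp: parts_with_def psize_def weight_u_def weight_v_def)
  then have "card (parts_with ((#) c ` S) n u v) =
      (if fst c \<le> n \<and> weight_v [c] \<le> v \<and> weight_u [c] \<le> u
       then card (parts_with S (n - fst c) (u - weight_u [c]) (v - weight_v [c])) else 0)" for n u v
    by (simp add: card_image)
  then show ?thesis
    by (simp add: fps_eq_iff part_monomial_def fps_nth_monomial_mult genfun_def)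
qed

lemma Cons_tails_admissible: "(#) c ` tails c \<subseteq> Collect admissible"
  by (auto simp: tails_def)

lemma bounded_parts_admissible: "bounded_parts kx \<subseteq> Collect admissible"
  by (auto simp: bounded_parts_def)

lemma G_succ:
  assumes "rank kx + 1 = rank c" "allowed_part c"
  shows "G c = G kx + part_monomial c * genfun (tails c)"
proof -
  have "bounded_parts c = bounded_parts kx \<union> (#) c ` tails c"
  proof (intro set_eqI iffI)
    fix p assume p: "p \<in> bounded_parts c"
    show "p \<in> bounded_parts kx \<union> (#) c ` tails c"
    proof (cases p)
      case (Cons h q)
      with p have "admissible (h # q)" "rank h \<le> rank c"
        by (auto simp: bounded_parts_def cle_def)
      moreover have "h = c" if "rank kx < rank h"
      proof (rule rank_inj_valid)
        show "valid_cint h" "valid_cint c"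
          using assms(2) \<open>admissible (h # q)\<close> by (auto simp: admissible_Cons allowed_part_def)
        show "rank h = rank c"
          using that assms(1) \<open>rank h \<le> rank c\<close> by simp
      qed
      ultimately show ?thesis
        using Cons by (auto simp: bounded_parts_def tails_def cle_def not_le)
    qed (use p in \<open>simp add: bounded_parts_def\<close>)
  qed (use assms in \<open>auto simp: bounded_parts_def tails_def cle_def\<close>)
  moreover have "bounded_parts kx \<inter> (#) c ` tails c = {}"
    using assms by (auto simp: bounded_parts_def tails_def cle_def)
  ultimately show ?thesis
    by (simp add: G_eq_genfun genfun_Un_disjoint bounded_parts_admissible
        Cons_tails_admissible genfun_Cons_image)
qed

lemma genfun_tails_eq_G:
  assumes "allowed_part c" and follow: "\<And>h. allowed_part h \<Longrightarrow> may_follow c h \<longleftrightarrow> cle h mu"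
  shows "genfun (tails c) = G mu"
proof -
  have "tails c = bounded_parts mu"
  proof (intro set_eqI)
    fix p show "p \<in> tails c \<longleftrightarrow> p \<in> bounded_parts mu"
      using assms follow[of "hd p"]
      by (cases p) (auto simp: tails_def bounded_parts_def admissible_Cons)
  qed
  then show ?thesis by (simp add: G_eq_genfun)
qed

lemma genfun_tails_split:
  assumes "allowed_part c" and follow: "\<And>h. allowed_part h \<Longrightarrow> may_follow c h \<longleftrightarrow> cle h mu \<or> h = d"
    and "\<not> cle d mu"
  shows "genfun (tails c) = G mu + part_monomial d * genfun (tails d)"
proof -
  have "tails c = bounded_parts mu \<union> (#) d ` tails d"
  proof (intro set_eqI)
    fix p show "p \<in> tails c \<longleftrightarrow> p \<in> bounded_parts mu \<union> (#) d ` tails d"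
      using assms follow[of "hd p"]
      by (cases p) (auto simp: tails_def bounded_parts_def admissible_Cons)
  qed
  moreover have "bounded_parts mu \<inter> (#) d ` tails d = {}"
    using assms(3) by (auto simp: bounded_parts_def)
  ultimately show ?thesis
    by (simp add: G_eq_genfun genfun_Un_disjoint bounded_parts_admissible
        Cons_tails_admissible genfun_Cons_image)
qed

lemma genfun_tails_odd_Cab:
  assumes "k \<ge> 1" shows "genfun (tails (2*k+1, Cab)) = G (2*k-1, Ca)"
proof (rule genfun_tails_eq_G)
  show "allowed_part (2*k+1, Cab)"
    using assms by (simp add: allowed_part_def valid_cint_def)
  show "may_follow (2*k+1, Cab) h \<longleftrightarrow> cle h (2*k-1, Ca)" if "allowed_part h" for h
    using assms that by (cases h; cases "snd h";
        simp add: allowed_part_def valid_cint_def may_follow_def cle_def rank_valid del: rank.simps; arith)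
qed

lemma genfun_tails_odd_Ca:
  assumes "k \<ge> 1" shows "genfun (tails (2*k+1, Ca)) = G (2*k, Cab)"
proof (rule genfun_tails_eq_G)
  show "allowed_part (2*k+1, Ca)"
    using assms by (simp add: allowed_part_def valid_cint_def)
  show "may_follow (2*k+1, Ca) h \<longleftrightarrow> cle h (2*k, Cab)" if "allowed_part h" for h
    using assms that by (cases h; cases "snd h";
        simp add: allowed_part_def valid_cint_def may_follow_def cle_def rank_valid del: rank.simps; arith)
qed

lemma genfun_tails_odd_Cb2:
  assumes "k \<ge> 1" shows "genfun (tails (2*k+1, Cb2)) = G (2*k-1, Ca)"
proof (rule genfun_tails_eq_G)
  show "allowed_part (2*k+1, Cb2)"
    using assms by (simp add: allowed_part_def valid_cint_def)
  show "may_follow (2*k+1, Cb2) h \<longleftrightarrow> cle h (2*k-1, Ca)" if "allowed_part h" for h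
    using assms that by (cases h; cases "snd h";
        simp add: allowed_part_def valid_cint_def may_follow_def cle_def rank_valid del: rank.simps; arith)
qed

lemma genfun_tails_odd_Cb:
  assumes "k \<ge> 1" shows "genfun (tails (2*k+1, Cb)) = G (2*k, Ca)"
proof (rule genfun_tails_eq_G)
  show "allowed_part (2*k+1, Cb)"
    using assms by (simp add: allowed_part_def valid_cint_def)
  show "may_follow (2*k+1, Cb) h \<longleftrightarrow> cle h (2*k, Ca)" if "allowed_part h" for h
    using assms that by (cases h; cases "snd h";
        simp add: allowed_part_def valid_cint_def may_follow_def cle_def rank_valid del: rank.simps; arith)
qed

lemma genfun_tails_even_Cb:
  assumes "k \<ge> 1" shows "genfun (tails (2*k, Cb)) = G (2*k-1, Ca)"
proof (rule genfun_tails_eq_G)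
  show "allowed_part (2*k, Cb)"
    using assms by (simp add: allowed_part_def valid_cint_def)
  show "may_follow (2*k, Cb) h \<longleftrightarrow> cle h (2*k-1, Ca)" if "allowed_part h" for h
    using assms that by (cases h; cases "snd h";
        simp add: allowed_part_def valid_cint_def may_follow_def cle_def rank_valid del: rank.simps; arith)
qed

lemma genfun_tails_even_Cab:
  assumes "k \<ge> 1"
  shows "genfun (tails (2*k+2, Cab)) = G (2*k, Ca) + part_monomial (2*k, Cb) * G (2*k-1, Ca)"
proof -
  have "genfun (tails (2*k+2, Cab)) = G (2*k, Ca) + part_monomial (2*k, Cb) * genfun (tails (2*k, Cb))"
  proof (rule genfun_tails_split)
    show "allowed_part (2*k+2, Cab)"
      using assms by (simp add: allowed_part_def valid_cint_def)
    show "may_follow (2*k+2, Cab) h \<longleftrightarrow> cle h (2*k, Ca) \<or> h = (2*k, Cb)" if "allowed_part h" for h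
      using assms that by (cases h; cases "snd h";
        simp add: allowed_part_def valid_cint_def may_follow_def cle_def rank_valid del: rank.simps; arith)
    show "\<not> cle (2*k, Cb) (2*k, Ca)"
      using assms by (simp add: cle_def rank_valid del: rank.simps)
  qed
  then show ?thesis using genfun_tails_even_Cb[OF assms] by simp
qed

lemma genfun_tails_even_Ca:
  assumes "k \<ge> 1"
  shows "genfun (tails (2*k+2, Ca)) = G (2*k, Ca) + part_monomial (2*k, Cb) * G (2*k-1, Ca)"
proof -
  have "genfun (tails (2*k+2, Ca)) = G (2*k, Ca) + part_monomial (2*k, Cb) * genfun (tails (2*k, Cb))"
  proof (rule genfun_tails_split)
    show "allowed_part (2*k+2, Ca)"
      using assms by (simp add: allowed_part_def valid_cint_def)
    show "may_follow (2*k+2, Ca) h \<longleftrightarrow> cle h (2*k, Ca) \<or> h = (2*k, Cb)" if "allowed_part h" for h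
      using assms that by (cases h; cases "snd h";
        simp add: allowed_part_def valid_cint_def may_follow_def cle_def rank_valid del: rank.simps; arith)
    show "\<not> cle (2*k, Cb) (2*k, Ca)"
      using assms by (simp add: cle_def rank_valid del: rank.simps)
  qed
  then show ?thesis using genfun_tails_even_Cb[OF assms] by simp
qed

lemma genfun_tails_Ca2:
  assumes "k \<ge> 1"
  shows "genfun (tails (2*k+3, Ca2)) = G (2*k, Ca) + part_monomial (2*k, Cb) * G (2*k-1, Ca)"
proof -
  have "genfun (tails (2*k+3, Ca2)) = G (2*k, Ca) + part_monomial (2*k, Cb) * genfun (tails (2*k, Cb))"
  proof (rule genfun_tails_split)
    show "allowed_part (2*k+3, Ca2)"
      using assms by (simp add: allowed_part_def valid_cint_def)
    show "may_follow (2*k+3, Ca2) h \<longleftrightarrow> cle h (2*k, Ca) \<or> h = (2*k, Cb)" if "allowed_part h" for h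
      using assms that by (cases h; cases "snd h";
        simp add: allowed_part_def valid_cint_def may_follow_def cle_def rank_valid del: rank.simps; arith)
    show "\<not> cle (2*k, Cb) (2*k, Ca)"
      using assms by (simp add: cle_def rank_valid del: rank.simps)
  qed
  then show ?thesis using genfun_tails_even_Cb[OF assms] by simp
qed

lemma G_odd_Cab:
  assumes "k \<ge> 1"
  shows "G (2*k+1, Cab) = G (2*k, Cb) + vara * varb * varq ^ (2*k+1) * G (2*k-1, Ca)"
  using G_succ[of "(2*k, Cb)" "(2*k+1, Cab)"] genfun_tails_odd_Cab[OF assms] assms
  by (simp add: rank_valid allowed_part_def valid_cint_def part_monomial_simps Suc_le_eq
      del: rank.simps)

lemma G_odd_Ca:
  assumes "k \<ge> 1"
  shows "G (2*k+1, Ca) = G (2*k+1, Cab) + vara * varq ^ (2*k+1) * G (2*k, Cab)"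
  using G_succ[of "(2*k+1, Cab)" "(2*k+1, Ca)"] genfun_tails_odd_Ca[OF assms] assms
  by (simp add: rank_valid allowed_part_def valid_cint_def part_monomial_simps Suc_le_eq
      del: rank.simps)

lemma G_odd_Cb2:
  assumes "k \<ge> 1"
  shows "G (2*k+1, Cb2) = G (2*k+1, Ca) + varb ^ 2 * varq ^ (2*k+1) * G (2*k-1, Ca)"
  using G_succ[of "(2*k+1, Ca)" "(2*k+1, Cb2)"] genfun_tails_odd_Cb2[OF assms] assms
  by (simp add: rank_valid allowed_part_def valid_cint_def part_monomial_simps Suc_le_eq
      del: rank.simps)

lemma G_odd_Cb:
  assumes "k \<ge> 1"
  shows "G (2*k+1, Cb) = G (2*k+1, Cb2) + varb * varq ^ (2*k+1) * G (2*k, Ca)"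
  using G_succ[of "(2*k+1, Cb2)" "(2*k+1, Cb)"] genfun_tails_odd_Cb[OF assms] assms
  by (simp add: rank_valid allowed_part_def valid_cint_def part_monomial_simps Suc_le_eq
      del: rank.simps)

lemma G_even_Cab:
  assumes "k \<ge> 1"
  shows "G (2*k+2, Cab) = G (2*k+1, Cb) + vara * varb * varq ^ (2*k+2) * G (2*k, Ca)
      + vara * varb ^ 2 * varq ^ (4*k+2) * G (2*k-1, Ca)"
proof -
  have q_power: "varq ^ (4*k+2) = varq ^ (2*k+2) * varq ^ (2*k)"
    by (simp flip: power_add)
  show ?thesis
    unfolding q_power using G_succ[of "(2*k+1, Cb)" "(2*k+2, Cab)"] genfun_tails_even_Cab[OF assms] assms
    by (simp add: rank_valid allowed_part_def valid_cint_def part_monomial_simps algebra_simps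
        power2_eq_square Suc_le_eq del: rank.simps)
qed

lemma G_even_Ca:
  assumes "k \<ge> 1"
  shows "G (2*k+2, Ca) = G (2*k+2, Cab) + vara * varq ^ (2*k+2) * G (2*k, Ca)
      + vara * varb * varq ^ (4*k+2) * G (2*k-1, Ca)"
proof -
  have q_power: "varq ^ (4*k+2) = varq ^ (2*k+2) * varq ^ (2*k)"
    by (simp flip: power_add)
  show ?thesis
    unfolding q_power using G_succ[of "(2*k+2, Cab)" "(2*k+2, Ca)"] genfun_tails_even_Ca[OF assms] assms
    by (simp add: rank_valid allowed_part_def valid_cint_def part_monomial_simps algebra_simps
        power2_eq_square Suc_le_eq del: rank.simps)
qed

lemma G_Ca2:
  assumes "k \<ge> 1"
  shows "G (2*k+3, Ca2) = G (2*k+2, Ca) + vara ^ 2 * varq ^ (2*k+3) * G (2*k, Ca)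
      + vara ^ 2 * varb * varq ^ (4*k+3) * G (2*k-1, Ca)"
proof -
  have q_power: "varq ^ (4*k+3) = varq ^ (2*k+3) * varq ^ (2*k)"
    by (simp flip: power_add)
  show ?thesis
    unfolding q_power using G_succ[of "(2*k+2, Ca)" "(2*k+3, Ca2)"] genfun_tails_Ca2[OF assms] assms
    by (simp add: rank_valid allowed_part_def valid_cint_def part_monomial_simps algebra_simps
        power2_eq_square Suc_le_eq del: rank.simps)
qed

lemma G_even_Cb:
  assumes "k \<ge> 1"
  shows "G (2*k+2, Cb) = G (2*k+3, Ca2) + varb * varq ^ (2*k+2) * G (2*k+1, Ca)"
  using G_succ[of "(2*k+3, Ca2)" "(2*k+2, Cb)"] genfun_tails_even_Cb[of "k+1"] assms
  by (simp add: rank_valid allowed_part_def valid_cint_def part_monomial_simps Suc_le_eq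
      del: rank.simps)

theorem lemma3p2:
  fixes k :: nat
  assumes "k \<ge> 1"
  shows
   "G (2*k+1, Cab) = G (2*k, Cb) + vara * varb * varq ^ (2*k+1) * G (2*k-1, Ca) \<and>
    G (2*k+1, Ca) = G (2*k+1, Cab) + vara * varq ^ (2*k+1) * G (2*k, Cab) \<and>
    G (2*k+1, Cb2) = G (2*k+1, Ca) + varb ^ 2 * varq ^ (2*k+1) * G (2*k-1, Ca) \<and>
    G (2*k+1, Cb) = G (2*k+1, Cb2) + varb * varq ^ (2*k+1) * G (2*k, Ca) \<and>
    G (2*k+2, Cab) = G (2*k+1, Cb) + vara * varb * varq ^ (2*k+2) * G (2*k, Ca)
                     + vara * varb ^ 2 * varq ^ (4*k+2) * G (2*k-1, Ca) \<and>
    G (2*k+2, Ca) = G (2*k+2, Cab) + vara * varq ^ (2*k+2) * G (2*k, Ca)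
                     + vara * varb * varq ^ (4*k+2) * G (2*k-1, Ca) \<and>
    G (2*k+3, Ca2) = G (2*k+2, Ca) + vara ^ 2 * varq ^ (2*k+3) * G (2*k, Ca)
                     + vara ^ 2 * varb * varq ^ (4*k+3) * G (2*k-1, Ca) \<and>
    G (2*k+2, Cb) = G (2*k+3, Ca2) + varb * varq ^ (2*k+2) * G (2*k+1, Ca)"
  by (intro conjI G_odd_Cab[OF assms] G_odd_Ca[OF assms] G_odd_Cb2[OF assms] G_odd_Cb[OF assms]
      G_even_Cab[OF assms] G_even_Ca[OF assms] G_Ca2[OF assms] G_even_Cb[OF assms])

end
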